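(* Let $C$ and $C'$ be filtered chain complexes with strictly filtration-decreasing differentials, and let $a\in\mathbb{R}$, $\delta>0$. Assume $C^{[a+\delta,a+3\delta)}=C^{[a,a+4\delta)}$ are both two-dimensional, while $C'^{[a,a+4\delta)}=0$. Assume there are chain maps $\phi\colon C\to C'$ and $\psi\colon C'\to C$, both of degree $\epsilon>0$, such that $\psi\phi$ and $\phi\psi$ are homotopic to automorphisms of filtered chain complexes via chain homotopies of degree $\epsilon$. If $\delta>\epsilon>0$, then $C^{[a+\delta,a+3\delta)}$ is a complex generated by two elements $x,y$ with $\partial x=ky$ for some unit $k$.
   Context: For a filtered complex $C$ with action filtration $\ell$, $C^{<a}=\ell^{-1}(-\infty,a)$ and $C^{[a,b)}=C^{<b}/C^{<a}$ is the quotient complex in the action window $[a,b)$. A map has degree $\epsilon$ if it raises action by at most $\epsilon$. An automorphism of filtered chain complexes is a degree-zero chain map with degree-zero inverse. *)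

theory Defs
  imports Complex_Main "HOL-Library.Extended_Real"
begin

text \<open>
  A filtered chain complex over a field 'k: a 'k-vector space (carrier type 'v,
  scalar multiplication s), a linear differential d with d o d = 0, and an action
  filtration l : C -> R u {-infinity} (values in ereal, never +infinity) which is
  non-Archimedean, invariant under nonzero scalars, with l x = -infinity iff x = 0.
  (Ungraded.)
\<close>

definition filtered_complex ::
  "('k::field \<Rightarrow> 'v::ab_group_add \<Rightarrow> 'v) \<Rightarrow> ('v \<Rightarrow> 'v) \<Rightarrow> ('v \<Rightarrow> ereal) \<Rightarrow> bool" where
  "filtered_complex s d l \<longleftrightarrow>
     vector_space s \<and> Vector_Spaces.linear s s d \<and> (\<forall>x. d (d x) = 0) \<and>
     (\<forall>x. l x \<noteq> \<infinity>) \<and> (\<forall>x. l x = -\<infinity> \<longleftrightarrow> x = 0) \<and>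
     (\<forall>x y. l (x + y) \<le> max (l x) (l y)) \<and>
     (\<forall>c x. c \<noteq> 0 \<longrightarrow> l (s c x) = l x)"

definition strictly_decreasing :: "('v::zero \<Rightarrow> 'v) \<Rightarrow> ('v \<Rightarrow> ereal) \<Rightarrow> bool" where
  "strictly_decreasing d l \<longleftrightarrow> (\<forall>x. x \<noteq> 0 \<longrightarrow> l (d x) < l x)"

definition fsub :: "('v \<Rightarrow> ereal) \<Rightarrow> real \<Rightarrow> 'v set" where
  "fsub l a = {x. l x < ereal a}"

definition has_degree :: "('v \<Rightarrow> ereal) \<Rightarrow> ('w \<Rightarrow> ereal) \<Rightarrow> real \<Rightarrow> ('v \<Rightarrow> 'w) \<Rightarrow> bool" where
  "has_degree l l' e f \<longleftrightarrow> (\<forall>x. l' (f x) \<le> l x + ereal e)"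

definition chain_map ::
  "('k::field \<Rightarrow> 'v::ab_group_add \<Rightarrow> 'v) \<Rightarrow> ('v \<Rightarrow> 'v) \<Rightarrow>
   ('k \<Rightarrow> 'w::ab_group_add \<Rightarrow> 'w) \<Rightarrow> ('w \<Rightarrow> 'w) \<Rightarrow> ('v \<Rightarrow> 'w) \<Rightarrow> bool" where
  "chain_map s d s' d' f \<longleftrightarrow> Vector_Spaces.linear s s' f \<and> (\<forall>x. f (d x) = d' (f x))"

definition filtered_automorphism ::
  "('k::field \<Rightarrow> 'v::ab_group_add \<Rightarrow> 'v) \<Rightarrow> ('v \<Rightarrow> 'v) \<Rightarrow> ('v \<Rightarrow> ereal) \<Rightarrow> ('v \<Rightarrow> 'v) \<Rightarrow> bool" where
  "filtered_automorphism s d l A \<longleftrightarrow>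
     chain_map s d s d A \<and> has_degree l l 0 A \<and>
     (\<exists>B. chain_map s d s d B \<and> has_degree l l 0 B \<and> A \<circ> B = id \<and> B \<circ> A = id)"

definition homotopic_deg ::
  "('k::field \<Rightarrow> 'v::ab_group_add \<Rightarrow> 'v) \<Rightarrow> ('v \<Rightarrow> 'v) \<Rightarrow> ('v \<Rightarrow> ereal) \<Rightarrow> real \<Rightarrow>
   ('v \<Rightarrow> 'v) \<Rightarrow> ('v \<Rightarrow> 'v) \<Rightarrow> bool" where
  "homotopic_deg s d l e f g \<longleftrightarrow>
     (\<exists>K. Vector_Spaces.linear s s K \<and> has_degree l l e K \<and>
          (\<forall>x. f x - g x = d (K x) + K (d x)))"

text \<open>Dimension of the window C^{[a,b)} = C^{<b}/C^{<a} is n: there is a finite set B of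
  n elements of C^{<b} whose classes form a basis of the quotient.\<close>
definition window_basis ::
  "('k::field \<Rightarrow> 'v::ab_group_add \<Rightarrow> 'v) \<Rightarrow> ('v \<Rightarrow> ereal) \<Rightarrow> real \<Rightarrow> real \<Rightarrow> 'v set \<Rightarrow> bool" where
  "window_basis s l a b B \<longleftrightarrow>
     finite B \<and> B \<subseteq> fsub l b \<and>
     (\<forall>c. (\<Sum>v\<in>B. s (c v) v) \<in> fsub l a \<longrightarrow> (\<forall>v\<in>B. c v = 0)) \<and>
     (\<forall>z\<in>fsub l b. \<exists>c. z - (\<Sum>v\<in>B. s (c v) v) \<in> fsub l a)"

definition window_dim ::
  "('k::field \<Rightarrow> 'v::ab_group_add \<Rightarrow> 'v) \<Rightarrow> ('v \<Rightarrow> ereal) \<Rightarrow> real \<Rightarrow> real \<Rightarrow> nat \<Rightarrow> bool" where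
  "window_dim s l a b n \<longleftrightarrow> (\<exists>B. window_basis s l a b B \<and> card B = n)"

text \<open>For a \<le> a', b \<le> b': the map C^{[a,b)} \<rightarrow> C^{[a',b')} induced by inclusion is bijective.\<close>
definition window_map_iso :: "('v::ab_group_add \<Rightarrow> ereal) \<Rightarrow> real \<Rightarrow> real \<Rightarrow> real \<Rightarrow> real \<Rightarrow> bool" where
  "window_map_iso l a b a' b' \<longleftrightarrow>
     (\<forall>x\<in>fsub l b'. \<exists>y\<in>fsub l b. x - y \<in> fsub l a') \<and>
     (\<forall>y\<in>fsub l b. y \<in> fsub l a' \<longrightarrow> y \<in> fsub l a)"

text \<open>C^{[a+\<delta>,a+3\<delta>)} = C^{[a,a+4\<delta>)}: both natural maps out of C^{[a,a+3\<delta>)},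
  to C^{[a+\<delta>,a+3\<delta>)} and to C^{[a,a+4\<delta>)}, are isomorphisms.\<close>
definition windows_equal :: "('v::ab_group_add \<Rightarrow> ereal) \<Rightarrow> real \<Rightarrow> real \<Rightarrow> bool" where
  "windows_equal l a \<delta> \<longleftrightarrow>
     window_map_iso l a (a + 3*\<delta>) (a + \<delta>) (a + 3*\<delta>) \<and>
     window_map_iso l a (a + 3*\<delta>) a (a + 4*\<delta>)"

end

theory Submission
  imports Defs
begin

text \<open>
  Write \<open>F b\<close> for \<open>fsub l b\<close>. If \<open>\<partial>\<close> mapped \<open>F (a + 3\<delta>)\<close> into \<open>F (a + \<delta>)\<close>, the window
  equalities would make it map \<open>F (a + 4\<delta>)\<close> into \<open>F a\<close>. With \<open>\<psi>\<phi> - A = \<partial>K + K\<partial>\<close>, every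
  term of \<open>A x = \<psi>\<phi>x - \<partial>Kx - K\<partial>x\<close> would then lie in \<open>F (a + \<delta>)\<close> for \<open>x \<in> F (a + 3\<delta>)\<close>,
  since \<open>\<phi>x\<close> falls into the vanishing window of \<open>C'\<close> and \<open>\<epsilon> \<le> \<delta>\<close>; as \<open>A\<close> preserves action,
  so would \<open>x\<close>, and the window \<open>[a + \<delta>, a + 3\<delta>)\<close> would be zero. Hence some
  \<open>x \<in> F (a + 3\<delta>)\<close> has \<open>\<partial>x \<notin> F (a + \<delta>)\<close>. Applying \<open>\<partial>\<close> to a relation between the classes
  of \<open>x\<close> and \<open>\<partial>x\<close> shows that they are independent, so they form a basis of the
  two-dimensional window, with \<open>k = 1\<close>.
\<close>

context vector_space
begin

lemma combination_mod_subspace: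
  assumes S: "subspace S"
    and hx: "x - (a1 *s u + a2 *s v) \<in> S" and hy: "y - (b1 *s u + b2 *s v) \<in> S"
  shows "p *s x + q *s y - ((p * a1 + q * b1) *s u + (p * a2 + q * b2) *s v) \<in> S"
proof -
  have "p *s x + q *s y - ((p * a1 + q * b1) *s u + (p * a2 + q * b2) *s v)
      = p *s (x - (a1 *s u + a2 *s v)) + q *s (y - (b1 *s u + b2 *s v))"
    by (simp add: scale_right_diff_distrib scale_right_distrib scale_left_distrib algebra_simps)
  also have "\<dots> \<in> S"
    using S hx hy by (intro subspace_add subspace_scale)
  finally show ?thesis .
qed

lemma independent_mod_subspace_det_nonzero:
  assumes S: "subspace S"
    and hx: "x - (a1 *s u + a2 *s v) \<in> S" and hy: "y - (b1 *s u + b2 *s v) \<in> S"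
    and indep: "\<And>p q. p *s x + q *s y \<in> S \<Longrightarrow> p = 0 \<and> q = 0"
  shows "a1 * b2 - a2 * b1 \<noteq> 0"
proof
  assume det: "a1 * b2 - a2 * b1 = 0"
  have c1: "b2 * a1 + - a2 * b1 = 0" and c2: "b2 * a2 + - a2 * b2 = 0"
    using det by (simp_all add: mult.commute)
  have "b2 *s x + (- a2) *s y \<in> S"
    using combination_mod_subspace[OF S hx hy, of b2 "- a2"] unfolding c1 c2 by simp
  then have a2: "a2 = 0" using indep[of b2 "- a2"] by simp
  have c3: "b1 * a1 + - a1 * b1 = 0" and c4: "b1 * a2 + - a1 * b2 = 0"
    using det by (simp_all add: mult.commute)
  have "b1 *s x + (- a1) *s y \<in> S"
    using combination_mod_subspace[OF S hx hy, of b1 "- a1"] unfolding c3 c4 by simp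
  then have a1: "a1 = 0" using indep[of b1 "- a1"] by simp
  have "1 *s x + 0 *s y \<in> S" using hx a1 a2 by simp
  then show False using indep[of 1 0] by simp
qed

lemma independent_pair_spans_mod_subspace:
  assumes S: "subspace S"
    and hx: "x - (a1 *s u + a2 *s v) \<in> S" and hy: "y - (b1 *s u + b2 *s v) \<in> S"
    and hz: "z - (g1 *s u + g2 *s v) \<in> S"
    and indep: "\<And>p q. p *s x + q *s y \<in> S \<Longrightarrow> p = 0 \<and> q = 0"
  shows "\<exists>p q. z - (p *s x + q *s y) \<in> S"
proof -
  define D where "D = a1 * b2 - a2 * b1"
  have D: "D \<noteq> 0"
    unfolding D_def using independent_mod_subspace_det_nonzero[OF S hx hy indep] .
  define p where "p = (g1 * b2 - g2 * b1) / D"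
  define q where "q = (a1 * g2 - a2 * g1) / D"
  have "(g1 * b2 - g2 * b1) * a1 + (a1 * g2 - a2 * g1) * b1 = g1 * D"
    and "(g1 * b2 - g2 * b1) * a2 + (a1 * g2 - a2 * g1) * b2 = g2 * D"
    unfolding D_def by (simp_all add: algebra_simps)
  then have cramer: "p * a1 + q * b1 = g1" "p * a2 + q * b2 = g2"
    using D unfolding p_def q_def by (simp_all add: divide_simps)
  have "z - (p *s x + q *s y)
      = (z - (g1 *s u + g2 *s v))
        - (p *s x + q *s y - ((p * a1 + q * b1) *s u + (p * a2 + q * b2) *s v))"
    unfolding cramer by simp
  also have "\<dots> \<in> S"
    using S hz combination_mod_subspace[OF S hx hy] by (rule subspace_diff)
  finally show ?thesis by blast
qed

end

lemma fsub_mono: "b \<le> b' \<Longrightarrow> fsub l b \<subseteq> fsub l b'"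
  unfolding fsub_def by (auto intro: less_le_trans)

lemma has_degree_fsub:
  assumes "has_degree l l' e f" and "x \<in> fsub l b"
  shows "f x \<in> fsub l' (b + e)"
proof -
  have "l' (f x) \<le> l x + ereal e" using assms(1) unfolding has_degree_def by blast
  also have "\<dots> < ereal (b + e)" using assms(2) unfolding fsub_def by (cases "l x") auto
  finally show ?thesis unfolding fsub_def by simp
qed

lemma filtered_complexD:
  assumes "filtered_complex s d l"
  shows "vector_space s" "Vector_Spaces.linear s s d" "d (d x) = 0"
    and "l x = -\<infinity> \<longleftrightarrow> x = 0" "l (x + y) \<le> max (l x) (l y)"
    and "c \<noteq> 0 \<Longrightarrow> l (s c x) = l x"
  using assms unfolding filtered_complex_def by auto

lemma zero_in_fsub: "filtered_complex s d l \<Longrightarrow> 0 \<in> fsub l b"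
  using filtered_complexD(4)[of s d l 0] by (simp add: fsub_def)

lemma subspace_fsub:
  assumes C: "filtered_complex s d l"
  shows "module.subspace s (fsub l b)"
proof -
  interpret vector_space s using filtered_complexD(1)[OF C] .
  show ?thesis
    unfolding subspace_def
  proof (intro conjI ballI allI)
    show "0 \<in> fsub l b" using zero_in_fsub[OF C] .
  next
    fix x y assume "x \<in> fsub l b" "y \<in> fsub l b"
    then show "x + y \<in> fsub l b"
      using filtered_complexD(5)[OF C, of x y] unfolding fsub_def by (simp add: max_def split: if_splits)
  next
    fix c x assume "x \<in> fsub l b"
    then show "s c x \<in> fsub l b"
      using filtered_complexD(6)[OF C, of c x] zero_in_fsub[OF C] by (cases "c = 0") (auto simp: fsub_def)
  qed
qed

lemma scale_in_fsub_iff: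
  assumes C: "filtered_complex s d l"
  shows "s c x \<in> fsub l b \<longleftrightarrow> c = 0 \<or> x \<in> fsub l b"
proof -
  interpret vector_space s using filtered_complexD(1)[OF C] .
  show ?thesis
    using filtered_complexD(6)[OF C, of c x] zero_in_fsub[OF C] by (cases "c = 0") (auto simp: fsub_def)
qed

lemma strictly_decreasing_fsub:
  assumes C: "filtered_complex s d l" and dec: "strictly_decreasing d l"
    and x: "x \<in> fsub l b"
  shows "d x \<in> fsub l b"
proof (cases "x = 0")
  case True
  interpret Vector_Spaces.linear s s d using filtered_complexD(2)[OF C] .
  show ?thesis using True zero_in_fsub[OF C] by simp
next
  case False
  then show ?thesis using dec x unfolding strictly_decreasing_def fsub_def by (auto intro: less_trans)
qed

lemma filtered_automorphism_action:
  assumes "filtered_automorphism s d l A"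
  shows "l (A x) = l x"
proof -
  obtain B where A0: "has_degree l l 0 A" and B0: "has_degree l l 0 B" and BA: "B \<circ> A = id"
    using assms unfolding filtered_automorphism_def by blast
  have "l x = l (B (A x))" using BA by (metis comp_apply id_apply)
  also have "\<dots> \<le> l (A x)" using B0 unfolding has_degree_def by (metis add.right_neutral zero_ereal_def)
  finally show ?thesis
    using A0 unfolding has_degree_def by (metis add.right_neutral antisym zero_ereal_def)
qed

lemma d_pair_independent_mod_fsub:
  assumes C: "filtered_complex s d l" "strictly_decreasing d l"
    and dx: "d x \<notin> fsub l b"
    and rel: "s p x + s q (d x) \<in> fsub l b"
  shows "p = 0 \<and> q = 0"
proof -
  interpret Vector_Spaces.linear s s d using filtered_complexD(2)[OF C(1)] .
  have "d (s p x + s q (d x)) = s p (d x)"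
    by (simp add: add scale filtered_complexD(3)[OF C(1)])
  then have "s p (d x) \<in> fsub l b" using strictly_decreasing_fsub[OF C rel] by simp
  then have p: "p = 0" using dx scale_in_fsub_iff[OF C(1)] by blast
  then have "s q (d x) \<in> fsub l b" using rel by simp
  then show ?thesis using p dx scale_in_fsub_iff[OF C(1)] by blast
qed

lemma window_dim_0_fsub_subset:
  assumes "window_dim s l a b 0"
  shows "fsub l b \<subseteq> fsub l a"
proof
  fix z assume z: "z \<in> fsub l b"
  obtain B where "window_basis s l a b B" "card B = 0"
    using assms unfolding window_dim_def by blast
  then have "B = {}" "\<exists>c. z - (\<Sum>v\<in>B. s (c v) v) \<in> fsub l a"
    using z unfolding window_basis_def by auto
  then show "z \<in> fsub l a" by simp
qed

lemma window_basis_not_in_fsub: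
  fixes s :: "'k::field \<Rightarrow> 'v::ab_group_add \<Rightarrow> 'v"
  assumes V: "vector_space s" and B: "window_basis s l a b B" and v: "v \<in> B"
  shows "v \<notin> fsub l a"
proof
  interpret vector_space s using V .
  have "(\<Sum>w\<in>B. s (if w = v then 1 else 0) w) = (\<Sum>w\<in>B. if w = v then v else 0)"
    by (rule sum.cong) auto
  also have "\<dots> = v" using B v unfolding window_basis_def by simp
  finally have sum: "(\<Sum>w\<in>B. s (if w = v then 1 else 0) w) = v" .
  have indep: "\<And>c. (\<Sum>w\<in>B. s (c w) w) \<in> fsub l a \<Longrightarrow> \<forall>w\<in>B. c w = 0"
    using B unfolding window_basis_def by blast
  assume "v \<in> fsub l a"
  then have "\<forall>w\<in>B. (if w = v then 1 else 0 :: 'k) = 0"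
    using indep[of "\<lambda>w. if w = v then 1 else 0"] sum by simp
  then have "(if v = v then 1 else 0 :: 'k) = 0" using v by blast
  then show False by simp
qed

lemma window_basis_pair_iff:
  assumes "x \<noteq> y"
  shows "window_basis s l a b {x, y} \<longleftrightarrow>
    x \<in> fsub l b \<and> y \<in> fsub l b \<and>
    (\<forall>p q. s p x + s q y \<in> fsub l a \<longrightarrow> p = 0 \<and> q = 0) \<and>
    (\<forall>z\<in>fsub l b. \<exists>p q. z - (s p x + s q y) \<in> fsub l a)"
proof -
  have sum: "(\<Sum>w\<in>{x, y}. s (c w) w) = s (c x) x + s (c y) y" for c
    using assms by simp
  have indep: "(\<forall>c. s (c x) x + s (c y) y \<in> fsub l a \<longrightarrow> c x = 0 \<and> c y = 0) \<longleftrightarrow>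
      (\<forall>p q. s p x + s q y \<in> fsub l a \<longrightarrow> p = 0 \<and> q = 0)"
  proof (intro iffI allI impI)
    fix p q
    assume H: "\<forall>c. s (c x) x + s (c y) y \<in> fsub l a \<longrightarrow> c x = 0 \<and> c y = 0"
      and rel: "s p x + s q y \<in> fsub l a"
    show "p = 0 \<and> q = 0"
      using H[rule_format, of "\<lambda>w. if w = x then p else q"] rel assms by simp
  qed auto
  have span: "(\<exists>c. z - (s (c x) x + s (c y) y) \<in> fsub l a) \<longleftrightarrow>
      (\<exists>p q. z - (s p x + s q y) \<in> fsub l a)" for z
  proof
    assume "\<exists>p q. z - (s p x + s q y) \<in> fsub l a"
    then obtain p q where "z - (s p x + s q y) \<in> fsub l a" by blast
    then show "\<exists>c. z - (s (c x) x + s (c y) y) \<in> fsub l a"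
      using assms by (intro exI[of _ "\<lambda>w. if w = x then p else q"]) simp
  qed auto
  show ?thesis
    unfolding window_basis_def sum using indep span by auto
qed

lemma window_basis_pair_of_independent:
  assumes V: "vector_space s" and S: "module.subspace s (fsub l a)"
    and uv: "window_basis s l a b {u, v}" "u \<noteq> v"
    and x: "x \<in> fsub l b" and y: "y \<in> fsub l b"
    and indep: "\<And>p q. s p x + s q y \<in> fsub l a \<Longrightarrow> p = 0 \<and> q = 0"
  shows "window_basis s l a b {x, y}"
proof -
  interpret vector_space s using V .
  have "x \<noteq> y"
  proof
    assume "x = y"
    then have "s 1 x + s (- 1) y = 0" by (simp add: scale_minus_left)
    then show False using indep[of 1 "- 1"] subspace_0[OF S] by simp
  qed
  have span_uv: "\<And>z. z \<in> fsub l b \<Longrightarrow> \<exists>p q. z - (s p u + s q v) \<in> fsub l a"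
    using uv window_basis_pair_iff by blast
  have "\<exists>p q. z - (s p x + s q y) \<in> fsub l a" if z: "z \<in> fsub l b" for z
  proof -
    obtain a1 a2 where "x - (s a1 u + s a2 v) \<in> fsub l a" using span_uv[OF x] by blast
    moreover obtain b1 b2 where "y - (s b1 u + s b2 v) \<in> fsub l a" using span_uv[OF y] by blast
    moreover obtain g1 g2 where "z - (s g1 u + s g2 v) \<in> fsub l a" using span_uv[OF z] by blast
    ultimately show ?thesis using independent_pair_spans_mod_subspace[OF S _ _ _ indep] by blast
  qed
  then show ?thesis
    unfolding window_basis_pair_iff[OF \<open>x \<noteq> y\<close>] using x y indep by auto
qed

lemma windows_equal_d_fsub:
  assumes C: "filtered_complex s d l" "strictly_decreasing d l"
    and eq: "windows_equal l a \<delta>"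
    and closed: "d ` fsub l (a + 3*\<delta>) \<subseteq> fsub l (a + \<delta>)"
  shows "d ` fsub l (a + 4*\<delta>) \<subseteq> fsub l a"
proof
  interpret vector_space s using filtered_complexD(1)[OF C(1)] .
  interpret Vector_Spaces.linear s s d using filtered_complexD(2)[OF C(1)] .
  have lower: "\<And>y. y \<in> fsub l (a + 3*\<delta>) \<Longrightarrow> y \<in> fsub l (a + \<delta>) \<Longrightarrow> y \<in> fsub l a"
    and lift: "\<And>z. z \<in> fsub l (a + 4*\<delta>) \<Longrightarrow> \<exists>y\<in>fsub l (a + 3*\<delta>). z - y \<in> fsub l a"
    using eq unfolding windows_equal_def window_map_iso_def by blast+
  fix w assume "w \<in> d ` fsub l (a + 4*\<delta>)"
  then obtain z where z: "z \<in> fsub l (a + 4*\<delta>)" and w: "w = d z" by blast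
  obtain y where y: "y \<in> fsub l (a + 3*\<delta>)" and r: "z - y \<in> fsub l a" using lift[OF z] by blast
  have "d y \<in> fsub l a"
    using lower strictly_decreasing_fsub[OF C y] closed y by blast
  moreover have "d (z - y) \<in> fsub l a" using strictly_decreasing_fsub[OF C r] .
  ultimately have "d y + d (z - y) \<in> fsub l a"
    by (rule subspace_add[OF subspace_fsub[OF C(1)]])
  then show "w \<in> fsub l a" by (simp add: w diff)
qed

lemma d_closed_window_vanishes:
  assumes C: "filtered_complex s d l" "strictly_decreasing d l"
    and eq: "windows_equal l a \<delta>"
    and zero': "fsub l' (a + 4*\<delta>) \<subseteq> fsub l' a"
    and \<phi>: "has_degree l l' \<epsilon> \<phi>" and \<psi>: "has_degree l' l \<epsilon> \<psi>"
    and A: "filtered_automorphism s d l A" and hA: "homotopic_deg s d l \<epsilon> (\<psi> \<circ> \<phi>) A"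
    and \<delta>: "0 \<le> \<delta>" "\<epsilon> \<le> \<delta>"
    and closed: "d ` fsub l (a + 3*\<delta>) \<subseteq> fsub l (a + \<delta>)"
  shows "fsub l (a + 3*\<delta>) \<subseteq> fsub l (a + \<delta>)"
proof
  interpret vector_space s using filtered_complexD(1)[OF C(1)] .
  obtain K where K: "has_degree l l \<epsilon> K" and hom: "\<And>x. \<psi> (\<phi> x) - A x = d (K x) + K (d x)"
    using hA unfolding homotopic_deg_def by auto
  have dF4: "d ` fsub l (a + 4*\<delta>) \<subseteq> fsub l a" using windows_equal_d_fsub[OF C eq closed] .
  have to_F4: "fsub l (a + 3*\<delta> + \<epsilon>) \<subseteq> fsub l (a + 4*\<delta>)"
    and to_F4': "fsub l' (a + 3*\<delta> + \<epsilon>) \<subseteq> fsub l' (a + 4*\<delta>)"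
    and to_F1: "fsub l (a + \<epsilon>) \<subseteq> fsub l (a + \<delta>)" "fsub l a \<subseteq> fsub l (a + \<delta>)"
    using \<delta> by (simp_all add: fsub_mono)
  fix x assume x: "x \<in> fsub l (a + 3*\<delta>)"
  have "\<phi> x \<in> fsub l' a" using has_degree_fsub[OF \<phi> x] to_F4' zero' by blast
  then have \<psi>\<phi>x: "\<psi> (\<phi> x) \<in> fsub l (a + \<delta>)"
    using has_degree_fsub[OF \<psi>] to_F1(1) by blast
  have "x \<in> fsub l (a + 4*\<delta>)" using x fsub_mono[of "a + 3*\<delta>" "a + 4*\<delta>" l] \<delta>(1) by auto
  then have "d x \<in> fsub l a" using dF4 by blast
  then have Kdx: "K (d x) \<in> fsub l (a + \<delta>)" using has_degree_fsub[OF K] to_F1(1) by blast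
  have "d (K x) \<in> fsub l a" using has_degree_fsub[OF K x] to_F4 dF4 by blast
  then have dKx: "d (K x) \<in> fsub l (a + \<delta>)" using to_F1(2) by blast
  have "A x = \<psi> (\<phi> x) - (d (K x) + K (d x))" using hom[of x] by (simp add: algebra_simps)
  also have "\<dots> \<in> fsub l (a + \<delta>)"
    using subspace_fsub[OF C(1)] \<psi>\<phi>x dKx Kdx by (intro subspace_diff subspace_add)
  finally show "x \<in> fsub l (a + \<delta>)"
    using filtered_automorphism_action[OF A] by (simp add: fsub_def)
qed

theorem lemma2p3:
  fixes s :: "'k::field \<Rightarrow> 'v::ab_group_add \<Rightarrow> 'v" and d :: "'v \<Rightarrow> 'v" and l :: "'v \<Rightarrow> ereal"
    and s' :: "'k \<Rightarrow> 'w::ab_group_add \<Rightarrow> 'w" and d' :: "'w \<Rightarrow> 'w" and l' :: "'w \<Rightarrow> ereal"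
    and \<phi> :: "'v \<Rightarrow> 'w" and \<psi> :: "'w \<Rightarrow> 'v"
    and a \<delta> \<epsilon> :: real
  assumes C: "filtered_complex s d l" "strictly_decreasing d l"
    and C': "filtered_complex s' d' l'" "strictly_decreasing d' l'"
    and \<delta>: "\<delta> > 0"
    and eq: "windows_equal l a \<delta>"
    and dim1: "window_dim s l (a + \<delta>) (a + 3*\<delta>) 2"
    and dim2: "window_dim s l a (a + 4*\<delta>) 2"
    and zero': "window_dim s' l' a (a + 4*\<delta>) 0"
    and \<phi>: "chain_map s d s' d' \<phi>" "has_degree l l' \<epsilon> \<phi>"
    and \<psi>: "chain_map s' d' s d \<psi>" "has_degree l' l \<epsilon> \<psi>"
    and h1: "\<exists>A. filtered_automorphism s d l A \<and> homotopic_deg s d l \<epsilon> (\<psi> \<circ> \<phi>) A"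
    and h2: "\<exists>A. filtered_automorphism s' d' l' A \<and> homotopic_deg s' d' l' \<epsilon> (\<phi> \<circ> \<psi>) A"
    and \<epsilon>: "\<epsilon> > 0" "\<delta> > \<epsilon>"
  shows "\<exists>x y k. window_basis s l (a + \<delta>) (a + 3*\<delta>) {x, y} \<and> x \<noteq> y \<and> k \<noteq> 0 \<and>
           d x - s k y \<in> fsub l (a + \<delta>)"
proof -
  have V: "vector_space s" using filtered_complexD(1)[OF C(1)] .
  interpret vector_space s using V .
  obtain B where B: "window_basis s l (a + \<delta>) (a + 3*\<delta>) B" "card B = 2"
    using dim1 unfolding window_dim_def by blast
  then obtain u v where uv: "B = {u, v}" "u \<noteq> v" by (meson card_2_iff)
  have "u \<in> fsub l (a + 3*\<delta>)" using B(1) uv(1) unfolding window_basis_def by blast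
  moreover have "u \<notin> fsub l (a + \<delta>)" using window_basis_not_in_fsub[OF V B(1)] uv(1) by blast
  moreover obtain A where A: "filtered_automorphism s d l A" "homotopic_deg s d l \<epsilon> (\<psi> \<circ> \<phi>) A"
    using h1 by blast
  note d_closed_window_vanishes[OF C eq window_dim_0_fsub_subset[OF zero'] \<phi>(2) \<psi>(2) A
      less_imp_le[OF \<delta>] less_imp_le[OF \<epsilon>(2)]]
  ultimately obtain x where x: "x \<in> fsub l (a + 3*\<delta>)" and dx: "d x \<notin> fsub l (a + \<delta>)"
    by blast
  have basis: "window_basis s l (a + \<delta>) (a + 3*\<delta>) {x, d x}"
    by (rule window_basis_pair_of_independent[OF V subspace_fsub[OF C(1)]
          B(1)[unfolded uv(1)] uv(2) x strictly_decreasing_fsub[OF C x]])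
      (rule d_pair_independent_mod_fsub[OF C dx])
  have "x \<noteq> d x"
  proof
    assume "x = d x"
    then have "d x = 0" using filtered_complexD(3)[OF C(1), of x] by simp
    then show False using dx zero_in_fsub[OF C(1)] by simp
  qed
  moreover have "d x - s 1 (d x) \<in> fsub l (a + \<delta>)" using zero_in_fsub[OF C(1)] by simp
  ultimately show ?thesis using basis one_neq_zero by blast
qed

end
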